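(* Let $R$ be a $*$-ring. Then $R$ is strongly $J$-$*$-clean if and only if (1) $R$ is strongly $*$-clean, and (2) for every maximal ideal $M$ of $R$, $1$ is not the sum of two units in $R/M$.
   Context: All rings are associative with identity. A $*$-ring is a ring $R$ with an involution $*$, i.e. a map $a\mapsto a^*$ with $(a+b)^*=a^*+b^*$, $(ab)^*=b^*a^*$, $(a^* )^*=a$. $U(R)$ denotes the group of units and $J(R)$ the Jacobson radical of $R$. A projection is an element $e$ with $e^2=e=e^*$. $R$ is strongly $J$-$*$-clean if every $a\in R$ can be written $a=e+u$ with $e$ a projection, $u\in J(R)$ and $ae=ea$. $R$ is strongly $*$-clean if every $a\in R$ can be written $a=e+u$ with $e$ a projection, $u\in U(R)$ and $eu=ue$. Maximal ideals are two-sided. *)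

theory Defs
  imports Main
begin

text \<open>Rings are modelled by the type class ring_1 (associative, with identity,
not necessarily commutative); the involution is an explicit function.\<close>

definition star_ring :: "('a::ring_1 \<Rightarrow> 'a) \<Rightarrow> bool" where
  "star_ring s \<longleftrightarrow> (\<forall>a b. s (a + b) = s a + s b \<and> s (a * b) = s b * s a \<and> s (s a) = a)"

definition ring_units :: "'a::ring_1 set" where
  "ring_units = {u. \<exists>v. u * v = 1 \<and> v * u = 1}"

definition left_ideal :: "'a::ring_1 set \<Rightarrow> bool" where
  "left_ideal I \<longleftrightarrow> 0 \<in> I \<and> (\<forall>a\<in>I. \<forall>b\<in>I. a + b \<in> I) \<and> (\<forall>a\<in>I. - a \<in> I)
     \<and> (\<forall>r a. a \<in> I \<longrightarrow> r * a \<in> I)"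

definition two_sided_ideal :: "'a::ring_1 set \<Rightarrow> bool" where
  "two_sided_ideal I \<longleftrightarrow> left_ideal I \<and> (\<forall>r a. a \<in> I \<longrightarrow> a * r \<in> I)"

definition maximal_left_ideal :: "'a::ring_1 set \<Rightarrow> bool" where
  "maximal_left_ideal I \<longleftrightarrow> left_ideal I \<and> I \<noteq> UNIV
     \<and> (\<forall>K. left_ideal K \<and> I \<subseteq> K \<and> K \<noteq> UNIV \<longrightarrow> K = I)"

definition maximal_ideal :: "'a::ring_1 set \<Rightarrow> bool" where
  "maximal_ideal M \<longleftrightarrow> two_sided_ideal M \<and> M \<noteq> UNIV
     \<and> (\<forall>K. two_sided_ideal K \<and> M \<subseteq> K \<and> K \<noteq> UNIV \<longrightarrow> K = M)"

definition jacobson :: "'a::ring_1 set" where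
  "jacobson = \<Inter> {I. maximal_left_ideal I}"

definition projection :: "('a::ring_1 \<Rightarrow> 'a) \<Rightarrow> 'a \<Rightarrow> bool" where
  "projection s e \<longleftrightarrow> e * e = e \<and> s e = e"

definition strongly_J_star_clean :: "('a::ring_1 \<Rightarrow> 'a) \<Rightarrow> bool" where
  "strongly_J_star_clean s \<longleftrightarrow>
     (\<forall>a. \<exists>e u. projection s e \<and> u \<in> jacobson \<and> a = e + u \<and> a * e = e * a)"

definition strongly_star_clean :: "('a::ring_1 \<Rightarrow> 'a) \<Rightarrow> bool" where
  "strongly_star_clean s \<longleftrightarrow>
     (\<forall>a. \<exists>e u. projection s e \<and> u \<in> ring_units \<and> a = e + u \<and> e * u = u * e)"

text \<open>The coset u + M is a unit of the quotient ring R/M (unfolded).\<close>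
definition unit_mod :: "'a::ring_1 set \<Rightarrow> 'a \<Rightarrow> bool" where
  "unit_mod M u \<longleftrightarrow> (\<exists>w. u * w - 1 \<in> M \<and> w * u - 1 \<in> M)"

text \<open>In R/M, 1 is the sum of two units: 1 + M = (u + M) + (v + M) with both cosets units.\<close>
definition one_sum_two_units_mod :: "'a::ring_1 set \<Rightarrow> bool" where
  "one_sum_two_units_mod M \<longleftrightarrow> (\<exists>u v. unit_mod M u \<and> unit_mod M v \<and> 1 - (u + v) \<in> M)"

end

theory Submission
  imports Defs
begin

text \<open>
  If \<open>R\<close> is strongly J-*-clean, writing \<open>x = e + j\<close> shows \<open>x\<^sup>2 - x \<in> J(R)\<close>; since \<open>J(R)\<close> lies in
  every maximal ideal \<open>M\<close>, the ring \<open>R/M\<close> is Boolean, so its only unit is \<open>1\<close> and \<open>1 + 1 = 0 \<noteq> 1\<close>.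
  Writing \<open>e + x = (1 - e) + (2e - 1)(1 + (2e - 1)x)\<close> turns a J-decomposition into a unit
  decomposition and back, because \<open>2e - 1\<close> is an involution.

  Conversely, in a strongly *-clean ring every idempotent \<open>f = e + u\<close> satisfies \<open>f = 1 - e\<close> (the
  unit \<open>f - e\<close> has \<open>(f - e)\<^sup>3 = f - e\<close>), so all idempotents are projections, and in a *-ring this
  makes them central. For a maximal left ideal \<open>I\<close>, the largest two-sided ideal \<open>P\<close> inside \<open>I\<close> is
  then a maximal ideal and every \<open>x \<notin> I\<close> is a unit modulo \<open>P\<close>. If a unit \<open>u\<close> had \<open>1 + u \<notin> I\<close>,
  then \<open>1 = (1 + u) + (-u)\<close> would be a sum of two units in \<open>R/P\<close>; hence \<open>1 + u \<in> J(R)\<close> for every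
  unit \<open>u\<close>.
\<close>

lemma left_ideal_zero: "left_ideal I \<Longrightarrow> 0 \<in> I"
  unfolding left_ideal_def by blast

lemma left_ideal_add: "left_ideal I \<Longrightarrow> a \<in> I \<Longrightarrow> b \<in> I \<Longrightarrow> a + b \<in> I"
  unfolding left_ideal_def by blast

lemma left_ideal_uminus: "left_ideal I \<Longrightarrow> a \<in> I \<Longrightarrow> - a \<in> I"
  unfolding left_ideal_def by blast

lemma left_ideal_diff: "left_ideal I \<Longrightarrow> a \<in> I \<Longrightarrow> b \<in> I \<Longrightarrow> a - b \<in> I"
  using left_ideal_add[of I a "- b"] left_ideal_uminus[of I b] by simp

lemma left_ideal_mult_left: "left_ideal I \<Longrightarrow> a \<in> I \<Longrightarrow> r * a \<in> I"
  unfolding left_ideal_def by blast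

lemma two_sided_ideal_imp_left_ideal: "two_sided_ideal I \<Longrightarrow> left_ideal I"
  unfolding two_sided_ideal_def by blast

lemma two_sided_ideal_mult_right: "two_sided_ideal I \<Longrightarrow> a \<in> I \<Longrightarrow> a * r \<in> I"
  unfolding two_sided_ideal_def by blast

lemma one_ring_units [simp]: "1 \<in> ring_units"
  unfolding ring_units_def by auto

lemma ring_units_mult: "u \<in> ring_units \<Longrightarrow> v \<in> ring_units \<Longrightarrow> u * v \<in> ring_units"
proof -
  assume "u \<in> ring_units" "v \<in> ring_units"
  then obtain u' v' where "u * u' = 1" "u' * u = 1" "v * v' = 1" "v' * v = 1"
    unfolding ring_units_def by blast
  then have "(u * v) * (v' * u') = 1" "(v' * u') * (u * v) = 1"
    by (metis mult.assoc mult_1_right)+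
  then show ?thesis
    unfolding ring_units_def by blast
qed

lemma ring_units_uminus: "u \<in> ring_units \<Longrightarrow> - u \<in> ring_units"
proof -
  assume "u \<in> ring_units"
  then obtain v where "u * v = 1" "v * u = 1"
    unfolding ring_units_def by blast
  then have "(- u) * (- v) = 1" "(- v) * (- u) = 1"
    by simp_all
  then show ?thesis
    unfolding ring_units_def by blast
qed

lemma left_ideal_eq_UNIV_if_unit:
  assumes "left_ideal I" "u \<in> I" "u \<in> ring_units"
  shows "I = UNIV"
proof -
  obtain v where "v * u = 1"
    using assms(3) unfolding ring_units_def by blast
  then have "1 \<in> I"
    using left_ideal_mult_left[OF assms(1,2)] by metis
  then have "x * 1 \<in> I" for x
    using left_ideal_mult_left[OF assms(1)] by blast
  then show ?thesis
    by auto
qed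

lemma one_notin_proper_left_ideal: "left_ideal I \<Longrightarrow> I \<noteq> UNIV \<Longrightarrow> 1 \<notin> I"
  using left_ideal_eq_UNIV_if_unit[of I 1] by auto

lemma maximal_left_ideal_imp_left_ideal: "maximal_left_ideal I \<Longrightarrow> left_ideal I"
  unfolding maximal_left_ideal_def by blast

lemma one_notin_maximal_left_ideal: "maximal_left_ideal I \<Longrightarrow> 1 \<notin> I"
  unfolding maximal_left_ideal_def using one_notin_proper_left_ideal by blast

lemma left_ideal_Union_chain:
  assumes "C \<noteq> {}" and ideals: "\<And>I. I \<in> C \<Longrightarrow> left_ideal I"
    and chain: "\<And>I K. I \<in> C \<Longrightarrow> K \<in> C \<Longrightarrow> I \<subseteq> K \<or> K \<subseteq> I"
  shows "left_ideal (\<Union>C)"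
  unfolding left_ideal_def
proof (intro conjI ballI allI impI)
  show "0 \<in> \<Union>C"
    using \<open>C \<noteq> {}\<close> ideals left_ideal_zero by blast
next
  fix a b assume "a \<in> \<Union>C" "b \<in> \<Union>C"
  then obtain I K where "I \<in> C" "K \<in> C" "a \<in> I" "b \<in> K"
    by blast
  then show "a + b \<in> \<Union>C"
    using chain[of I K] ideals left_ideal_add by blast
next
  fix a assume "a \<in> \<Union>C"
  then show "- a \<in> \<Union>C"
    using ideals left_ideal_uminus by blast
next
  fix r a assume "a \<in> \<Union>C"
  then show "r * a \<in> \<Union>C"
    using ideals left_ideal_mult_left by blast
qed

lemma maximal_left_ideal_exists:
  fixes L :: "'a::ring_1 set"
  assumes "left_ideal L" "1 \<notin> L"
  shows "\<exists>I. maximal_left_ideal I \<and> L \<subseteq> I"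
proof -
  define A where "A = {K. left_ideal K \<and> L \<subseteq> K \<and> (1::'a) \<notin> K}"
  have "\<Union>C \<in> A" if "C \<noteq> {}" "subset.chain A C" for C
  proof -
    have "C \<subseteq> A" and chain: "\<And>I K. I \<in> C \<Longrightarrow> K \<in> C \<Longrightarrow> I \<subseteq> K \<or> K \<subseteq> I"
      using that(2) unfolding subset_chain_def by blast+
    then have "left_ideal (\<Union>C)"
      using left_ideal_Union_chain[OF that(1)] unfolding A_def by blast
    then show ?thesis
      using \<open>C \<subseteq> A\<close> \<open>C \<noteq> {}\<close> unfolding A_def by blast
  qed
  moreover have "L \<in> A"
    using assms unfolding A_def by blast
  ultimately obtain I where I: "I \<in> A" and max: "\<forall>K\<in>A. I \<subseteq> K \<longrightarrow> K = I"
    using subset_Zorn_nonempty[of A] by blast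
  have "maximal_left_ideal I"
    unfolding maximal_left_ideal_def
  proof (intro conjI allI impI)
    show "left_ideal I" "I \<noteq> UNIV"
      using I unfolding A_def by blast+
  next
    fix K assume "left_ideal K \<and> I \<subseteq> K \<and> K \<noteq> UNIV"
    then show "K = I"
      using max I one_notin_proper_left_ideal unfolding A_def by blast
  qed
  then show ?thesis
    using I unfolding A_def by blast
qed

lemma left_ideal_principal: "left_ideal (range (\<lambda>x. x * a))"
  unfolding left_ideal_def
proof (intro conjI ballI allI impI)
  show "0 \<in> range (\<lambda>x. x * a)"
    using mult_zero_left by (metis rangeI)
next
  fix y z assume "y \<in> range (\<lambda>x. x * a)" "z \<in> range (\<lambda>x. x * a)"
  then obtain x x' where "y = x * a" "z = x' * a"
    by blast
  then show "y + z \<in> range (\<lambda>x. x * a)"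
    by (simp add: rangeI flip: distrib_right)
next
  fix y assume "y \<in> range (\<lambda>x. x * a)"
  then obtain x where "y = x * a"
    by blast
  then have "- y = (- x) * a"
    by simp
  then show "- y \<in> range (\<lambda>x. x * a)"
    by blast
next
  fix r y assume "y \<in> range (\<lambda>x. x * a)"
  then obtain x where "y = x * a"
    by blast
  then show "r * y \<in> range (\<lambda>x. x * a)"
    by (simp add: rangeI flip: mult.assoc)
qed

lemma left_ideal_sum:
  assumes I: "left_ideal I" and K: "left_ideal K"
  shows "left_ideal {i + k | i k. i \<in> I \<and> k \<in> K}"
  unfolding left_ideal_def
proof (intro conjI ballI allI impI)
  show "0 \<in> {i + k | i k. i \<in> I \<and> k \<in> K}"
    using left_ideal_zero[OF I] left_ideal_zero[OF K] by force
next
  fix x y assume "x \<in> {i + k | i k. i \<in> I \<and> k \<in> K}" "y \<in> {i + k | i k. i \<in> I \<and> k \<in> K}"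
  then obtain i k i' k' where "i \<in> I" "k \<in> K" "i' \<in> I" "k' \<in> K" "x + y = (i + i') + (k + k')"
    by (auto simp: algebra_simps)
  then show "x + y \<in> {i + k | i k. i \<in> I \<and> k \<in> K}"
    using left_ideal_add[OF I] left_ideal_add[OF K] by blast
next
  fix x assume "x \<in> {i + k | i k. i \<in> I \<and> k \<in> K}"
  then obtain i k where "i \<in> I" "k \<in> K" "- x = - i + - k"
    by auto
  then show "- x \<in> {i + k | i k. i \<in> I \<and> k \<in> K}"
    using left_ideal_uminus[OF I] left_ideal_uminus[OF K] by blast
next
  fix r x assume "x \<in> {i + k | i k. i \<in> I \<and> k \<in> K}"
  then obtain i k where "i \<in> I" "k \<in> K" "r * x = r * i + r * k"
    by (auto simp: distrib_left)
  then show "r * x \<in> {i + k | i k. i \<in> I \<and> k \<in> K}"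
    using left_ideal_mult_left[OF I] left_ideal_mult_left[OF K] by blast
qed

lemma maximal_left_ideal_one_eq:
  fixes b :: "'a::ring_1"
  assumes I: "maximal_left_ideal I" and "b \<notin> I"
  shows "\<exists>i c. i \<in> I \<and> 1 = i + c * b"
proof -
  define K where "K = {i + k | i k. i \<in> I \<and> k \<in> range (\<lambda>c. c * b)}"
  have LI: "left_ideal I"
    using I maximal_left_ideal_imp_left_ideal by blast
  then have "left_ideal K"
    unfolding K_def using left_ideal_sum left_ideal_principal by blast
  moreover have "i = i + 0 * b" for i :: 'a
    by simp
  then have "I \<subseteq> K"
    unfolding K_def by blast
  moreover have "b = 0 + 1 * b"
    by simp
  then have "b \<in> K"
    unfolding K_def using left_ideal_zero[OF LI] by blast
  ultimately have "K = UNIV"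
    using I \<open>b \<notin> I\<close> unfolding maximal_left_ideal_def by blast
  then show ?thesis
    unfolding K_def by blast
qed

lemma mem_jacobson_iff: "(x::'a::ring_1) \<in> jacobson \<longleftrightarrow> (\<forall>I. maximal_left_ideal I \<longrightarrow> x \<in> I)"
  unfolding jacobson_def by blast

lemma left_ideal_Inter: "(\<And>I. I \<in> S \<Longrightarrow> left_ideal I) \<Longrightarrow> left_ideal (\<Inter>S)"
  unfolding left_ideal_def by blast

lemma left_ideal_jacobson: "left_ideal jacobson"
  unfolding jacobson_def using left_ideal_Inter maximal_left_ideal_imp_left_ideal by blast

lemma jacobson_left_invertible:
  assumes "j \<in> jacobson"
  shows "\<exists>z. z * (1 - j) = 1"
proof (rule ccontr)
  assume no_inverse: "\<nexists>z. z * (1 - j) = 1"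
  then have "1 \<notin> range (\<lambda>x. x * (1 - j))"
    by (metis imageE)
  then obtain I where I: "maximal_left_ideal I" "range (\<lambda>x. x * (1 - j)) \<subseteq> I"
    using maximal_left_ideal_exists left_ideal_principal by blast
  have "1 - j \<in> I"
    using I(2) rangeI[of "\<lambda>x. x * (1 - j)" 1] by auto
  moreover have "j \<in> I"
    using assms I(1) mem_jacobson_iff by blast
  ultimately have "(1 - j) + j \<in> I"
    by (rule left_ideal_add[OF maximal_left_ideal_imp_left_ideal[OF I(1)]])
  then show False
    using one_notin_maximal_left_ideal[OF I(1)] by simp
qed

lemma one_minus_jacobson_unit:
  assumes "j \<in> jacobson"
  shows "1 - j \<in> ring_units"
proof -
  obtain z where z: "z * (1 - j) = 1"
    using jacobson_left_invertible[OF assms] by blast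
  then have "z = 1 - (- (z * j))"
    by (simp add: algebra_simps)
  moreover have "- (z * j) \<in> jacobson"
    using assms left_ideal_jacobson left_ideal_mult_left left_ideal_uminus by blast
  ultimately obtain z' where "z' * z = 1"
    using jacobson_left_invertible by force
  then have "z' = 1 - j"
    using z by (metis mult.assoc mult_1 mult_1_right)
  then show ?thesis
    using z \<open>z' * z = 1\<close> unfolding ring_units_def by blast
qed

lemma mem_jacobsonI:
  fixes x :: "'a::ring_1"
  assumes "\<And>r. \<exists>z. z * (1 - r * x) = 1"
  shows "x \<in> jacobson"
  unfolding mem_jacobson_iff
proof (intro allI impI)
  fix I :: "'a set" assume I: "maximal_left_ideal I"
  show "x \<in> I"
  proof (rule ccontr)
    assume "x \<notin> I"
    then obtain i c where "i \<in> I" and one: "1 = i + c * x"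
      using maximal_left_ideal_one_eq[OF I] by blast
    obtain z where "z * (1 - c * x) = 1"
      using assms by blast
    moreover have "1 - c * x = i"
      using one by (simp add: algebra_simps)
    ultimately have "1 \<in> I"
      using \<open>i \<in> I\<close> left_ideal_mult_left maximal_left_ideal_imp_left_ideal[OF I] by metis
    then show False
      using one_notin_maximal_left_ideal[OF I] by blast
  qed
qed

lemma jacobson_mult_right:
  assumes "x \<in> jacobson"
  shows "x * t \<in> jacobson"
proof (rule mem_jacobsonI)
  fix r
  obtain z where "z * (1 - (t * r) * x) = 1"
    using assms left_ideal_jacobson left_ideal_mult_left jacobson_left_invertible by blast
  then have z: "z - z * (t * r) * x = 1"
    by (simp add: algebra_simps)
  \<comment> \<open>if \<open>z\<close> is a left inverse of \<open>1 - ab\<close>, then \<open>1 + bza\<close> is one of \<open>1 - ba\<close>;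
    here \<open>a = t\<close> and \<open>b = r x\<close>\<close>
  have "(1 + r * x * z * t) * (1 - r * (x * t)) = 1 - r * x * t + r * x * (z - z * (t * r) * x) * t"
    by (simp add: algebra_simps)
  also have "\<dots> = 1"
    using z by (simp add: mult.assoc)
  finally show "\<exists>z. z * (1 - r * (x * t)) = 1"
    by blast
qed

lemma two_sided_ideal_jacobson: "two_sided_ideal jacobson"
  unfolding two_sided_ideal_def using left_ideal_jacobson jacobson_mult_right by blast

text \<open>The largest two-sided ideal contained in \<open>I\<close>; for a maximal left ideal \<open>I\<close> it is the
  annihilator of the simple module \<open>R/I\<close>.\<close>

definition ideal_core :: "'a::ring_1 set \<Rightarrow> 'a set" where
  "ideal_core I = {x. \<forall>r. x * r \<in> I}"

lemma two_sided_ideal_ideal_core: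
  assumes "left_ideal I"
  shows "two_sided_ideal (ideal_core I)"
  unfolding two_sided_ideal_def left_ideal_def ideal_core_def
  using left_ideal_zero[OF assms] left_ideal_add[OF assms] left_ideal_uminus[OF assms]
    left_ideal_mult_left[OF assms]
  by (auto simp: distrib_right mult.assoc)

lemma ideal_core_subset: "ideal_core I \<subseteq> I"
  unfolding ideal_core_def by (metis (mono_tags) mem_Collect_eq mult_1_right subsetI)

lemma two_sided_ideal_subset_ideal_core:
  "two_sided_ideal K \<Longrightarrow> K \<subseteq> I \<Longrightarrow> K \<subseteq> ideal_core I"
  unfolding ideal_core_def using two_sided_ideal_mult_right by blast

lemma jacobson_subset_maximal_ideal:
  assumes M: "maximal_ideal M"
  shows "jacobson \<subseteq> M"
proof -
  have TM: "two_sided_ideal M" and "M \<noteq> UNIV"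
    using M unfolding maximal_ideal_def by blast+
  then have "1 \<notin> M"
    using one_notin_proper_left_ideal two_sided_ideal_imp_left_ideal by blast
  then obtain I where I: "maximal_left_ideal I" "M \<subseteq> I"
    using maximal_left_ideal_exists two_sided_ideal_imp_left_ideal[OF TM] by blast
  have "two_sided_ideal (ideal_core I)"
    using two_sided_ideal_ideal_core[OF maximal_left_ideal_imp_left_ideal[OF I(1)]] .
  moreover have "ideal_core I \<noteq> UNIV"
    using ideal_core_subset one_notin_maximal_left_ideal[OF I(1)] by blast
  moreover have "M \<subseteq> ideal_core I"
    using two_sided_ideal_subset_ideal_core[OF TM I(2)] .
  ultimately have "ideal_core I = M"
    using M unfolding maximal_ideal_def by blast
  moreover have "jacobson \<subseteq> I"
    using I(1) mem_jacobson_iff by blast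
  ultimately show ?thesis
    using two_sided_ideal_subset_ideal_core[OF two_sided_ideal_jacobson] by metis
qed

lemma unit_mod_if_unit:
  assumes "0 \<in> P" "u \<in> ring_units"
  shows "unit_mod P u"
proof -
  obtain v where "u * v - 1 = 0" "v * u - 1 = 0"
    using assms(2) unfolding ring_units_def by auto
  then show ?thesis
    unfolding unit_mod_def using assms(1) by metis
qed

lemma idempotent_mod_eq_one:
  assumes P: "two_sided_ideal P" and "w * h - 1 \<in> P" and "h * h - h \<in> P"
  shows "h - 1 \<in> P"
proof -
  have LP: "left_ideal P"
    using P two_sided_ideal_imp_left_ideal by blast
  have "h - 1 = (w * (h * h - h) - (w * h - 1) * h) + (w * h - 1)"
    by (simp add: algebra_simps)
  moreover have "w * (h * h - h) - (w * h - 1) * h \<in> P"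
    using assms left_ideal_diff[OF LP] left_ideal_mult_left[OF LP] two_sided_ideal_mult_right
    by blast
  ultimately show ?thesis
    using left_ideal_add[OF LP] assms(2) by metis
qed

lemma idempotent_mod_eq_one_if_unit_mod:
  assumes "two_sided_ideal P" "h - v \<in> P" "v \<in> ring_units" "h * h - h \<in> P"
  shows "h - 1 \<in> P"
proof -
  obtain v' where "v' * v = 1"
    using assms(3) unfolding ring_units_def by blast
  then have "v' * h - 1 = v' * (h - v)"
    by (simp add: algebra_simps)
  then have "v' * h - 1 \<in> P"
    using assms(1,2) two_sided_ideal_imp_left_ideal left_ideal_mult_left by metis
  then show ?thesis
    using idempotent_mod_eq_one assms(1,4) by blast
qed

lemma not_one_sum_two_units_mod_if_idempotent_mod:
  assumes M: "two_sided_ideal M" "M \<noteq> UNIV" and idem: "\<And>x. x * x - x \<in> M"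
  shows "\<not> one_sum_two_units_mod M"
proof
  assume "one_sum_two_units_mod M"
  then obtain u v w w' where "1 - (u + v) \<in> M" "w * u - 1 \<in> M" "w' * v - 1 \<in> M"
    unfolding one_sum_two_units_mod_def unit_mod_def by blast
  \<comment> \<open>in the Boolean ring \<open>R/M\<close> both units are \<open>1\<close>, and \<open>1 + 1 = 0\<close>\<close>
  then have "1 - (u + v) \<in> M" "u - 1 \<in> M" "v - 1 \<in> M"
    using idempotent_mod_eq_one[OF M(1)] idem by blast+
  moreover have "- 1 = (1 - (u + v)) + (u - 1) + (v - 1)"
    by simp
  ultimately have "- 1 \<in> M"
    using M(1) two_sided_ideal_imp_left_ideal left_ideal_add by metis
  then show False
    using M left_ideal_eq_UNIV_if_unit two_sided_ideal_imp_left_ideal ring_units_uminus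
      one_ring_units by blast
qed

lemma star_ring_add: "star_ring s \<Longrightarrow> s (a + b) = s a + s b"
  unfolding star_ring_def by blast

lemma star_ring_mult: "star_ring s \<Longrightarrow> s (a * b) = s b * s a"
  unfolding star_ring_def by blast

lemma star_ring_involution: "star_ring s \<Longrightarrow> s (s a) = a"
  unfolding star_ring_def by blast

lemma star_ring_one:
  assumes "star_ring s"
  shows "s 1 = 1"
  using star_ring_mult[OF assms, of 1 "s 1"] star_ring_involution[OF assms] by simp

lemma star_ring_diff:
  assumes "star_ring s"
  shows "s (a - b) = s a - s b"
proof -
  have "s (a - b) + s b = s a"
    using star_ring_add[OF assms, of "a - b" b] by simp
  then show ?thesis
    by (simp add: algebra_simps)
qed

lemma projection_complement:
  assumes "star_ring s" "projection s e"
  shows "projection s (1 - e)"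
  using assms(2) star_ring_diff[OF assms(1), of 1 e] star_ring_one[OF assms(1)]
  unfolding projection_def by (simp add: algebra_simps)

lemma commuting_idempotents_diff_unit:
  fixes e f :: "'a::ring_1"
  assumes e: "e * e = e" and f: "f * f = f" and "e * f = f * e" and "f - e \<in> ring_units"
  shows "f = 1 - e"
proof -
  define u where "u = f - e"
  obtain v where v: "v * u = 1"
    using assms(4) unfolding u_def ring_units_def by blast
  have square: "u * u = f + e - (f * e + f * e)"
    unfolding u_def using assms by (simp add: algebra_simps)
  have "f * e * e = f * e" "f * e * f = f * e"
    using assms by (metis mult.assoc)+
  then have "u * u * u = u"
    unfolding square unfolding u_def using assms
    by (simp add: algebra_simps flip: mult.assoc)
  then have "u * u = 1"
    using v by (metis mult.assoc mult_1)
  moreover have "f * (u * u) = f - f * e"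
    unfolding square using assms by (simp add: algebra_simps flip: mult.assoc)
  ultimately have "f * e = 0"
    by simp
  then show ?thesis
    using square \<open>u * u = 1\<close> by (simp add: algebra_simps)
qed

lemma idempotent_selfadjoint_if_strongly_star_clean:
  assumes s: "star_ring s" and "strongly_star_clean s" and f: "f * f = f"
  shows "s f = f"
proof -
  obtain e u where e: "projection s e" and "u \<in> ring_units" "f = e + u" "e * u = u * e"
    using assms(2) unfolding strongly_star_clean_def by blast
  then have "f = 1 - e"
    using commuting_idempotents_diff_unit[of e f] f unfolding projection_def
    by (simp add: algebra_simps)
  then show ?thesis
    using projection_complement[OF s e] unfolding projection_def by simp
qed

definition central :: "'a::ring_1 \<Rightarrow> bool" where
  "central c \<longleftrightarrow> (\<forall>r. c * r = r * c)"

lemma central_one_minus: "central c \<Longrightarrow> central (1 - c)"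
  unfolding central_def by (simp add: algebra_simps)

lemma idempotent_central_if_selfadjoint:
  fixes s :: "'a::ring_1 \<Rightarrow> 'a" and e :: 'a
  assumes s: "star_ring s" and selfadjoint: "\<And>f. f * f = f \<Longrightarrow> s f = f" and e: "e * e = e"
  shows "central e"
  unfolding central_def
proof
  fix r
  have se: "s e = e" and s1e: "s (1 - e) = 1 - e"
    using selfadjoint e projection_complement[OF s] unfolding projection_def by auto
  have e1e: "e * (1 - e) = 0" "(1 - e) * e = 0"
    using e by (simp_all add: algebra_simps)
  have swap: "e * a * (1 - e) = (1 - e) * s a * e" for a
  proof -
    have "(e + e * a * (1 - e)) * (e + e * a * (1 - e))
        = e * e + (e * e) * a * (1 - e) + e * a * ((1 - e) * e) + e * a * ((1 - e) * e) * a * (1 - e)"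
      by (simp add: distrib_left distrib_right mult.assoc)
    then have "(e + e * a * (1 - e)) * (e + e * a * (1 - e)) = e + e * a * (1 - e)"
      using e e1e by simp
    then have "s (e + e * a * (1 - e)) = e + e * a * (1 - e)"
      using selfadjoint by blast
    moreover have "s (e + e * a * (1 - e)) = e + (1 - e) * s a * e"
      using star_ring_add[OF s] star_ring_mult[OF s] se s1e by (simp add: mult.assoc)
    ultimately show ?thesis
      by simp
  qed
  have vanish: "e * a * (1 - e) = 0" for a
  proof -
    have "e * a * (1 - e) = e * (e * a * (1 - e))"
      using e by (simp add: mult.assoc flip: mult.assoc[of e e])
    also have "\<dots> = e * (1 - e) * s a * e"
      using swap by (simp add: mult.assoc)
    finally show ?thesis
      using e1e by simp
  qed
  have "(1 - e) * r * e = 0"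
    using swap[of "s r"] vanish[of "s r"] star_ring_involution[OF s] by simp
  then show "e * r = r * e"
    using vanish[of r] by (simp add: algebra_simps)
qed

lemma central_mem_ideal_core: "left_ideal I \<Longrightarrow> central c \<Longrightarrow> c \<in> I \<Longrightarrow> c \<in> ideal_core I"
  unfolding ideal_core_def central_def using left_ideal_mult_left by fastforce

lemma central_idempotent_mem_ideal_core:
  assumes I: "maximal_left_ideal I" and e: "e * e = e" "central e"
  shows "e \<in> ideal_core I \<or> 1 - e \<in> ideal_core I"
proof (cases "e \<in> I")
  case True
  then show ?thesis
    using central_mem_ideal_core maximal_left_ideal_imp_left_ideal I e by blast
next
  case False
  then obtain i c where "i \<in> I" "1 = i + c * e"
    using maximal_left_ideal_one_eq[OF I] by blast
  have "(1 - e) * (c * e) = (1 - e) * e * c"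
    using e(2) unfolding central_def by (simp add: mult.assoc)
  also have "\<dots> = 0"
    using e(1) by (simp add: algebra_simps)
  finally have "1 - e = (1 - e) * i"
    using \<open>1 = i + c * e\<close> by (metis add.right_neutral distrib_left mult_1_right)
  then have "1 - e \<in> I"
    using \<open>i \<in> I\<close> left_ideal_mult_left maximal_left_ideal_imp_left_ideal[OF I] by metis
  then show ?thesis
    using central_mem_ideal_core central_one_minus maximal_left_ideal_imp_left_ideal I e by blast
qed

context
  assumes central_clean:
    "\<And>a::'a::ring_1. \<exists>e v. e * e = e \<and> central e \<and> v \<in> ring_units \<and> a = e + v"
begin

lemma idempotent_mod_ideal_core:
  fixes g :: 'a
  assumes I: "maximal_left_ideal I" and g: "g * g - g \<in> ideal_core I"
  shows "g \<in> ideal_core I \<or> g - 1 \<in> ideal_core I"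
proof -
  have P: "two_sided_ideal (ideal_core I)"
    using I maximal_left_ideal_imp_left_ideal two_sided_ideal_ideal_core by blast
  obtain e v where e: "e * e = e" "central e" and v: "v \<in> ring_units" and "g = e + v"
    using central_clean by blast
  then consider "g - v \<in> ideal_core I" | "(1 - g) - (- v) \<in> ideal_core I"
    using central_idempotent_mem_ideal_core[OF I e] by fastforce
  then show ?thesis
  proof cases
    case 1
    then show ?thesis
      using idempotent_mod_eq_one_if_unit_mod[OF P _ v g] by blast
  next
    case 2
    have "(1 - g) * (1 - g) - (1 - g) = g * g - g"
      by (simp add: algebra_simps)
    then have "(1 - g) - 1 \<in> ideal_core I"
      using idempotent_mod_eq_one_if_unit_mod[OF P 2 ring_units_uminus[OF v]] g by simp
    then show ?thesis
      using P two_sided_ideal_imp_left_ideal left_ideal_uminus by fastforce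
  qed
qed

lemma left_inverse_mod_ideal_core:
  fixes x :: 'a
  assumes I: "maximal_left_ideal I" and "x \<notin> I"
  shows "\<exists>w. w * x - 1 \<in> ideal_core I"
proof -
  have LI: "left_ideal I"
    using I maximal_left_ideal_imp_left_ideal by blast
  then have LP: "left_ideal (ideal_core I)"
    using two_sided_ideal_ideal_core two_sided_ideal_imp_left_ideal by blast
  obtain i c where "i \<in> I" and one: "1 = i + c * x"
    using maximal_left_ideal_one_eq[OF I \<open>x \<notin> I\<close>] by blast
  obtain e v where e: "e * e = e" "central e" and v: "v \<in> ring_units" and i: "i = e + v"
    using central_clean by blast
  obtain v' where v': "v' * v = 1"
    using v unfolding ring_units_def by blast
  have "e \<notin> ideal_core I"
  proof
    assume "e \<in> ideal_core I"
    then have "v \<in> I"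
      using i \<open>i \<in> I\<close> ideal_core_subset left_ideal_diff[OF LI] by fastforce
    then show False
      using left_ideal_eq_UNIV_if_unit[OF LI _ v] I unfolding maximal_left_ideal_def by blast
  qed
  then have "1 - e \<in> ideal_core I"
    using central_idempotent_mem_ideal_core[OF I e] by blast
  moreover have "(- (v' * c)) * x - 1 = - (v' * (1 - e))"
  proof -
    have complement: "1 - e = c * x + v"
      using one i by (simp add: algebra_simps)
    have "- (v' * (1 - e)) = (- (v' * c)) * x - v' * v"
      unfolding complement by (simp add: algebra_simps)
    then show ?thesis
      using v' by simp
  qed
  ultimately show ?thesis
    using left_ideal_uminus[OF LP] left_ideal_mult_left[OF LP] by metis
qed

lemma unit_mod_ideal_core:
  fixes x :: 'a
  assumes I: "maximal_left_ideal I" and "x \<notin> I"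
  shows "unit_mod (ideal_core I) x"
proof -
  have P: "two_sided_ideal (ideal_core I)" and LP: "left_ideal (ideal_core I)"
    using I maximal_left_ideal_imp_left_ideal two_sided_ideal_ideal_core
      two_sided_ideal_imp_left_ideal by blast+
  obtain w where w: "w * x - 1 \<in> ideal_core I"
    using left_inverse_mod_ideal_core[OF assms] by blast
  \<comment> \<open>\<open>x w\<close> is idempotent modulo the core, so it is \<open>0\<close> or \<open>1\<close> there\<close>
  have "x * w * (x * w) - x * w = x * (w * x - 1) * w"
    by (simp add: algebra_simps)
  then have "x * w * (x * w) - x * w \<in> ideal_core I"
    using w left_ideal_mult_left[OF LP] two_sided_ideal_mult_right[OF P] by metis
  then consider "x * w \<in> ideal_core I" | "x * w - 1 \<in> ideal_core I"
    using idempotent_mod_ideal_core[OF I] by blast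
  then show ?thesis
  proof cases
    case 1
    have "x = x * w * x - x * (w * x - 1)"
      by (simp add: algebra_simps)
    moreover have "x * w * x - x * (w * x - 1) \<in> ideal_core I"
      using 1 w left_ideal_diff[OF LP] left_ideal_mult_left[OF LP]
        two_sided_ideal_mult_right[OF P] by blast
    ultimately show ?thesis
      using ideal_core_subset \<open>x \<notin> I\<close> by auto
  next
    case 2
    then show ?thesis
      using w unfolding unit_mod_def by blast
  qed
qed

lemma maximal_ideal_ideal_core:
  fixes I :: "'a set"
  assumes I: "maximal_left_ideal I"
  shows "maximal_ideal (ideal_core I)"
  unfolding maximal_ideal_def
proof (intro conjI allI impI)
  show "two_sided_ideal (ideal_core I)"
    using I maximal_left_ideal_imp_left_ideal two_sided_ideal_ideal_core by blast
  show "ideal_core I \<noteq> UNIV"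
    using I ideal_core_subset one_notin_maximal_left_ideal by blast
next
  fix K :: "'a set"
  assume K: "two_sided_ideal K \<and> ideal_core I \<subseteq> K \<and> K \<noteq> UNIV"
  then have LK: "left_ideal K"
    using two_sided_ideal_imp_left_ideal by blast
  have "k \<in> ideal_core I" if "k \<in> K" for k
  proof (rule ccontr)
    assume "k \<notin> ideal_core I"
    then obtain r where "k * r \<notin> I"
      unfolding ideal_core_def by blast
    then obtain w where "w * (k * r) - 1 \<in> K"
      using left_inverse_mod_ideal_core[OF I] K by blast
    moreover have "w * (k * r) \<in> K"
      using \<open>k \<in> K\<close> K left_ideal_mult_left[OF LK] two_sided_ideal_mult_right by blast
    ultimately have "1 \<in> K"
      using left_ideal_diff[OF LK] by fastforce
    then show False
      using K left_ideal_eq_UNIV_if_unit[OF LK] one_ring_units by blast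
  qed
  then show "K = ideal_core I"
    using K by blast
qed

lemma one_plus_unit_mem_jacobson:
  fixes u :: 'a
  assumes no_sum: "\<And>M :: 'a set. maximal_ideal M \<Longrightarrow> \<not> one_sum_two_units_mod M"
    and u: "u \<in> ring_units"
  shows "1 + u \<in> jacobson"
  unfolding mem_jacobson_iff
proof (intro allI impI)
  fix I :: "'a set" assume I: "maximal_left_ideal I"
  have zero: "0 \<in> ideal_core I"
    using I maximal_left_ideal_imp_left_ideal two_sided_ideal_ideal_core
      two_sided_ideal_imp_left_ideal left_ideal_zero by blast
  then have "unit_mod (ideal_core I) (- u)"
    using unit_mod_if_unit ring_units_uminus[OF u] by blast
  moreover have "1 - ((1 + u) + - u) \<in> ideal_core I"
    using zero by simp
  ultimately have "\<not> unit_mod (ideal_core I) (1 + u)"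
    using no_sum[OF maximal_ideal_ideal_core[OF I]] unfolding one_sum_two_units_mod_def by blast
  then show "1 + u \<in> I"
    using unit_mod_ideal_core[OF I] by blast
qed

end

lemma idempotent_reflection_square:
  fixes e :: "'a::ring_1"
  assumes "e * e = e"
  shows "(2 * e - 1) * (2 * e - 1) = 1"
  using assms by (simp add: algebra_simps mult_2 mult_2_right)

lemma idempotent_add_eq_complement_add:
  fixes e :: "'a::ring_1"
  assumes "e * e = e"
  shows "e + x = (1 - e) + (2 * e - 1) * (1 + (2 * e - 1) * x)"
proof -
  have "(2 * e - 1) * (1 + (2 * e - 1) * x) = 2 * e - 1 + x"
    using idempotent_reflection_square[OF assms]
    by (simp add: distrib_left flip: mult.assoc)
  then show ?thesis
    by (simp add: mult_2)
qed

lemma idempotent_reflection_ring_units: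
  fixes e :: "'a::ring_1"
  assumes "e * e = e"
  shows "2 * e - 1 \<in> ring_units"
  using idempotent_reflection_square[OF assms] unfolding ring_units_def by blast

lemma strongly_star_clean_if_strongly_J_star_clean:
  assumes s: "star_ring s" and "strongly_J_star_clean s"
  shows "strongly_star_clean s"
  unfolding strongly_star_clean_def
proof
  fix a
  obtain e j where e: "projection s e" and "j \<in> jacobson" "a = e + j" "a * e = e * a"
    using assms(2) unfolding strongly_J_star_clean_def by blast
  have idem: "e * e = e"
    using e unfolding projection_def by blast
  define t where "t = 2 * e - 1"
  have "t \<in> ring_units"
    using idempotent_reflection_ring_units[OF idem] unfolding t_def .
  moreover have "1 - (- t) * j \<in> ring_units"
    using \<open>j \<in> jacobson\<close> left_ideal_jacobson left_ideal_mult_left one_minus_jacobson_unit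
    by blast
  ultimately have "t * (1 + t * j) \<in> ring_units"
    using ring_units_mult by fastforce
  moreover have "a = (1 - e) + t * (1 + t * j)"
    using idempotent_add_eq_complement_add[OF idem] \<open>a = e + j\<close> unfolding t_def by simp
  moreover have "(1 - e) * (a - (1 - e)) = (a - (1 - e)) * (1 - e)"
    using \<open>a * e = e * a\<close> by (simp add: algebra_simps)
  ultimately show "\<exists>e u. projection s e \<and> u \<in> ring_units \<and> a = e + u \<and> e * u = u * e"
    using projection_complement[OF s e] by (metis add_diff_cancel_left')
qed

lemma idempotent_mod_jacobson_if_strongly_J_star_clean:
  fixes s :: "'a::ring_1 \<Rightarrow> 'a" and x :: 'a
  assumes "strongly_J_star_clean s"
  shows "x * x - x \<in> jacobson"
proof -
  obtain e j where "projection s e" "j \<in> jacobson" "x = e + j" "x * e = e * x"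
    using assms unfolding strongly_J_star_clean_def by blast
  then have "e * e = e" "e * j = j * e"
    unfolding projection_def by (auto simp: algebra_simps)
  then have "x * x - x = (e + e + j - 1) * j"
    using \<open>x = e + j\<close> by (simp add: algebra_simps)
  then show ?thesis
    using \<open>j \<in> jacobson\<close> left_ideal_jacobson left_ideal_mult_left by metis
qed

lemma central_clean_if_strongly_star_clean:
  fixes s :: "'a::ring_1 \<Rightarrow> 'a" and a :: 'a
  assumes s: "star_ring s" and clean: "strongly_star_clean s"
  shows "\<exists>e v. e * e = e \<and> central e \<and> v \<in> ring_units \<and> a = e + v"
proof -
  obtain e v where "projection s e" "v \<in> ring_units" "a = e + v"
    using clean unfolding strongly_star_clean_def by blast
  moreover have "central e"
    using idempotent_central_if_selfadjoint[OF s
        idempotent_selfadjoint_if_strongly_star_clean[OF s clean]] calculation(1)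
    unfolding projection_def by blast
  ultimately show ?thesis
    unfolding projection_def by blast
qed

lemma strongly_J_star_clean_if_strongly_star_clean:
  fixes s :: "'a::ring_1 \<Rightarrow> 'a"
  assumes s: "star_ring s" and clean: "strongly_star_clean s"
    and no_sum: "\<And>M :: 'a set. maximal_ideal M \<Longrightarrow> \<not> one_sum_two_units_mod M"
  shows "strongly_J_star_clean s"
  unfolding strongly_J_star_clean_def
proof
  fix a
  obtain e u where e: "projection s e" and u: "u \<in> ring_units" "a = e + u" "e * u = u * e"
    using clean unfolding strongly_star_clean_def by blast
  have idem: "e * e = e"
    using e unfolding projection_def by blast
  define t where "t = 2 * e - 1"
  have "t \<in> ring_units"
    using idempotent_reflection_ring_units[OF idem] unfolding t_def .
  then have "1 + t * u \<in> jacobson"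
    using one_plus_unit_mem_jacobson[OF central_clean_if_strongly_star_clean[OF s clean] no_sum] ring_units_mult u(1) by blast
  then have "t * (1 + t * u) \<in> jacobson"
    using left_ideal_jacobson left_ideal_mult_left by metis
  moreover have "a = (1 - e) + t * (1 + t * u)"
    using idempotent_add_eq_complement_add[OF idem] u(2) unfolding t_def by simp
  moreover have "a * (1 - e) = (1 - e) * a"
    using u(2,3) idem by (simp add: algebra_simps)
  ultimately show "\<exists>e j. projection s e \<and> j \<in> jacobson \<and> a = e + j \<and> a * e = e * a"
    using projection_complement[OF s e] by blast
qed

theorem corollary2p5:
  fixes s :: "'a::ring_1 \<Rightarrow> 'a"
  assumes "star_ring s"
  shows "strongly_J_star_clean s \<longleftrightarrow>
           (strongly_star_clean s \<and> (\<forall>M::'a set. maximal_ideal M \<longrightarrow> \<not> one_sum_two_units_mod M))"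
proof
  assume J_clean: "strongly_J_star_clean s"
  have "\<not> one_sum_two_units_mod M" if M: "maximal_ideal M" for M :: "'a set"
  proof (rule not_one_sum_two_units_mod_if_idempotent_mod)
    show "two_sided_ideal M" "M \<noteq> UNIV"
      using M unfolding maximal_ideal_def by blast+
    show "x * x - x \<in> M" for x
      using idempotent_mod_jacobson_if_strongly_J_star_clean[OF J_clean]
        jacobson_subset_maximal_ideal[OF M] by blast
  qed
  then show "strongly_star_clean s \<and> (\<forall>M::'a set. maximal_ideal M \<longrightarrow> \<not> one_sum_two_units_mod M)"
    using strongly_star_clean_if_strongly_J_star_clean[OF assms J_clean] by blast
next
  assume "strongly_star_clean s \<and> (\<forall>M::'a set. maximal_ideal M \<longrightarrow> \<not> one_sum_two_units_mod M)"
  then show "strongly_J_star_clean s"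
    using strongly_J_star_clean_if_strongly_star_clean[OF assms] by blast
qed

end
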